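(* Let $\mathcal X,\mathcal Y$ be finite sets, let $B_1,\dots,B_r$ be $\mathcal X\times\mathcal Y$ blocky matrices, and let $\Gamma:\{0,1\}^r\to\{0,1\}$ be any function. Then the Boolean matrix $F$ defined by $F(x,y)=\Gamma(B_1(x,y),\dots,B_r(x,y))$ for $(x,y)\in\mathcal X\times\mathcal Y$ satisfies $\|F\|_{\gamma_2}\le 3^r$.
   Context: A Boolean matrix $F\in\{0,1\}^{\mathcal X\times\mathcal Y}$ is called blocky if there exist pairwise disjoint sets $\mathcal X_i\subseteq\mathcal X$ and pairwise disjoint sets $\mathcal Y_i\subseteq\mathcal Y$ such that the support $\{(x,y):F(x,y)=1\}$ of $F$ equals $\bigcup_i \mathcal X_i\times\mathcal Y_i$. For a real $\mathcal X\times\mathcal Y$ matrix $A$, the $\gamma_2$-factorization norm $\|A\|_{\gamma_2}$ is the infimum of all $c$ such that there exist a positive integer $d$ and vectors $u_x,v_y\in\mathbb{R}^d$ with $\langle u_x,v_y\rangle=A(x,y)$ and $\|u_x\|_2\|v_y\|_2\le c$ for all $x\in\mathcal X,y\in\mathcal Y$. *)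

theory Defs
  imports "HOL-Analysis.Analysis"
begin

text \<open>Matrices indexed by X \<times> Y are functions 'a \<Rightarrow> 'b \<Rightarrow> real, considered on X \<times> Y only.\<close>

definition boolean_matrix :: "'a set \<Rightarrow> 'b set \<Rightarrow> ('a \<Rightarrow> 'b \<Rightarrow> real) \<Rightarrow> bool" where
  "boolean_matrix X Y F \<longleftrightarrow> (\<forall>x\<in>X. \<forall>y\<in>Y. F x y = 0 \<or> F x y = 1)"

definition blocky :: "'a set \<Rightarrow> 'b set \<Rightarrow> ('a \<Rightarrow> 'b \<Rightarrow> real) \<Rightarrow> bool" where
  "blocky X Y F \<longleftrightarrow> boolean_matrix X Y F \<and>
     (\<exists>(I :: nat set) (Xs :: nat \<Rightarrow> 'a set) (Ys :: nat \<Rightarrow> 'b set).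
        (\<forall>i\<in>I. Xs i \<subseteq> X \<and> Ys i \<subseteq> Y) \<and>
        (\<forall>i\<in>I. \<forall>j\<in>I. i \<noteq> j \<longrightarrow> Xs i \<inter> Xs j = {} \<and> Ys i \<inter> Ys j = {}) \<and>
        {(x, y). x \<in> X \<and> y \<in> Y \<and> F x y = 1} = (\<Union>i\<in>I. Xs i \<times> Ys i))"

text \<open>gamma_2 factorization norm: vectors in R^d represented as nat \<Rightarrow> real on {..<d}.\<close>
definition gamma2 :: "'a set \<Rightarrow> 'b set \<Rightarrow> ('a \<Rightarrow> 'b \<Rightarrow> real) \<Rightarrow> real" where
  "gamma2 X Y A = Inf {c. 0 \<le> c \<and> (\<exists>(d::nat) (u :: 'a \<Rightarrow> nat \<Rightarrow> real) (v :: 'b \<Rightarrow> nat \<Rightarrow> real).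
       d \<ge> 1 \<and>
       (\<forall>x\<in>X. \<forall>y\<in>Y. (\<Sum>k<d. u x k * v y k) = A x y \<and>
          sqrt (\<Sum>k<d. (u x k)\<^sup>2) * sqrt (\<Sum>k<d. (v y k)\<^sup>2) \<le> c))}"

end

(*
  A blocky matrix B is the sum of the indicator matrices of its disjoint blocks, so it factors
  through the indicator vectors of the blocks with row and column vectors of squared norm at most 1;
  prepending an all-ones coordinate and negating, J - B (J the all-ones matrix) factors with squared norms at most 2.
  Expanding F = sum over the patterns S in {0,1}^r with Gamma(S) of the Hadamard products of
  the matrices B_i (S_i = 1) or J - B_i (S_i = 0), tensor products and direct sums of these
  factorizations give row and column vectors of squared norm at most
  sum over S of prod_i (1 or 2) = 3^r.
*)
theory Submission
  imports Defs
begin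

text \<open>The index set lies in nat only because a definition cannot quantify over types;
  \<open>factorizableI\<close> accepts a finite index set of any type.\<close>

definition factorizable :: "'a set \<Rightarrow> 'b set \<Rightarrow> ('a \<Rightarrow> 'b \<Rightarrow> real) \<Rightarrow> real \<Rightarrow> real \<Rightarrow> bool" where
  "factorizable X Y A a b \<longleftrightarrow> (\<exists>(K :: nat set) u v. finite K \<and>
     (\<forall>x\<in>X. \<forall>y\<in>Y. (\<Sum>k\<in>K. u x k * v y k) = A x y) \<and>
     (\<forall>x\<in>X. (\<Sum>k\<in>K. (u x k)\<^sup>2) \<le> a) \<and> (\<forall>y\<in>Y. (\<Sum>k\<in>K. (v y k)\<^sup>2) \<le> b))"

lemma factorizableI:
  fixes K :: "'k set" and u :: "'a \<Rightarrow> 'k \<Rightarrow> real" and v :: "'b \<Rightarrow> 'k \<Rightarrow> real"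
  assumes "finite K"
    and "\<And>x y. x \<in> X \<Longrightarrow> y \<in> Y \<Longrightarrow> (\<Sum>k\<in>K. u x k * v y k) = A x y"
    and "\<And>x. x \<in> X \<Longrightarrow> (\<Sum>k\<in>K. (u x k)\<^sup>2) \<le> a"
    and "\<And>y. y \<in> Y \<Longrightarrow> (\<Sum>k\<in>K. (v y k)\<^sup>2) \<le> b"
  shows "factorizable X Y A a b"
proof -
  obtain h where h: "bij_betw h {0..<card K} K"
    using ex_bij_betw_nat_finite[OF assms(1)] by blast
  have reindex: "(\<Sum>n\<in>{0..<card K}. g (h n)) = (\<Sum>k\<in>K. g k)" for g :: "'k \<Rightarrow> real"
    using sum.reindex_bij_betw[OF h] .
  show ?thesis
    unfolding factorizable_def
  proof (intro exI[of _ "{0..<card K}"] exI[of _ "\<lambda>x n. u x (h n)"] exI[of _ "\<lambda>y n. v y (h n)"]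
      conjI ballI finite_atLeastLessThan)
    fix x y assume "x \<in> X" "y \<in> Y"
    then show "(\<Sum>n\<in>{0..<card K}. u x (h n) * v y (h n)) = A x y"
      using reindex[of "\<lambda>k. u x k * v y k"] assms(2) by simp
  next
    fix x assume "x \<in> X"
    then show "(\<Sum>n\<in>{0..<card K}. (u x (h n))\<^sup>2) \<le> a"
      using reindex[of "\<lambda>k. (u x k)\<^sup>2"] assms(3) by simp
  next
    fix y assume "y \<in> Y"
    then show "(\<Sum>n\<in>{0..<card K}. (v y (h n))\<^sup>2) \<le> b"
      using reindex[of "\<lambda>k. (v y k)\<^sup>2"] assms(4) by simp
  qed
qed

lemma factorizableE:
  assumes "factorizable X Y A a b"
  obtains K :: "nat set" and u :: "'a \<Rightarrow> nat \<Rightarrow> real" and v :: "'b \<Rightarrow> nat \<Rightarrow> real"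
  where "finite K"
    and "\<And>x y. x \<in> X \<Longrightarrow> y \<in> Y \<Longrightarrow> (\<Sum>k\<in>K. u x k * v y k) = A x y"
    and "\<And>x. x \<in> X \<Longrightarrow> (\<Sum>k\<in>K. (u x k)\<^sup>2) \<le> a"
    and "\<And>y. y \<in> Y \<Longrightarrow> (\<Sum>k\<in>K. (v y k)\<^sup>2) \<le> b"
  using assms unfolding factorizable_def by (elim exE conjE) (auto intro!: that)

lemma gamma2_le_sqrt_if_factorizable:
  assumes "factorizable X Y A a b" and "0 \<le> a" and "0 \<le> b"
  shows "gamma2 X Y A \<le> sqrt (a * b)"
proof -
  obtain K :: "nat set" and u :: "'a \<Rightarrow> nat \<Rightarrow> real" and v :: "'b \<Rightarrow> nat \<Rightarrow> real"
    where K: "finite K"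
    and uv: "\<And>x y. x \<in> X \<Longrightarrow> y \<in> Y \<Longrightarrow> (\<Sum>k\<in>K. u x k * v y k) = A x y"
    and u: "\<And>x. x \<in> X \<Longrightarrow> (\<Sum>k\<in>K. (u x k)\<^sup>2) \<le> a"
    and v: "\<And>y. y \<in> Y \<Longrightarrow> (\<Sum>k\<in>K. (v y k)\<^sup>2) \<le> b"
    using assms(1) by (elim factorizableE) auto
  obtain d where "K \<subseteq> {..<d}"
    using finite_nat_bounded[OF K] by blast
  then have K_eq: "{..<Suc d} \<inter> K = K"
    by auto
  have pad: "(\<Sum>k<Suc d. if k \<in> K then g k else 0) = (\<Sum>k\<in>K. g k)" for g :: "nat \<Rightarrow> real"
    by (simp only: sum.inter_restrict[OF finite_lessThan, symmetric] K_eq)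
  define u' where "u' x k = (if k \<in> K then u x k else 0)" for x k
  define v' where "v' y k = (if k \<in> K then v y k else 0)" for y k
  have "sqrt (a * b) \<in> {c. 0 \<le> c \<and> (\<exists>(d::nat) (u :: 'a \<Rightarrow> nat \<Rightarrow> real) (v :: 'b \<Rightarrow> nat \<Rightarrow> real).
       d \<ge> 1 \<and> (\<forall>x\<in>X. \<forall>y\<in>Y. (\<Sum>k<d. u x k * v y k) = A x y \<and>
          sqrt (\<Sum>k<d. (u x k)\<^sup>2) * sqrt (\<Sum>k<d. (v y k)\<^sup>2) \<le> c))}"
  proof (intro CollectI conjI exI[of _ "Suc d"] exI[of _ u'] exI[of _ v'] ballI)
    fix x y assume x: "x \<in> X" and y: "y \<in> Y"
    have "(u' x k)\<^sup>2 = (if k \<in> K then (u x k)\<^sup>2 else 0)"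
      "(v' y k)\<^sup>2 = (if k \<in> K then (v y k)\<^sup>2 else 0)"
      "u' x k * v' y k = (if k \<in> K then u x k * v y k else 0)" for k
      by (simp_all add: u'_def v'_def)
    then have sums: "(\<Sum>k<Suc d. (u' x k)\<^sup>2) = (\<Sum>k\<in>K. (u x k)\<^sup>2)"
      "(\<Sum>k<Suc d. (v' y k)\<^sup>2) = (\<Sum>k\<in>K. (v y k)\<^sup>2)"
      "(\<Sum>k<Suc d. u' x k * v' y k) = (\<Sum>k\<in>K. u x k * v y k)"
      by (simp_all only: pad)
    show "(\<Sum>k<Suc d. u' x k * v' y k) = A x y"
      using sums uv[OF x y] by simp
    show "sqrt (\<Sum>k<Suc d. (u' x k)\<^sup>2) * sqrt (\<Sum>k<Suc d. (v' y k)\<^sup>2) \<le> sqrt (a * b)"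
      unfolding sums real_sqrt_mult
      by (intro mult_mono real_sqrt_le_mono u[OF x] v[OF y]) (simp_all add: sum_nonneg assms)
  qed (simp_all add: assms)
  then show ?thesis
    unfolding gamma2_def by (rule cInf_lower) (auto intro: bdd_belowI[where m=0])
qed

lemma factorizable_cong:
  assumes "factorizable X Y A a b" and "\<And>x y. x \<in> X \<Longrightarrow> y \<in> Y \<Longrightarrow> A x y = A' x y"
  shows "factorizable X Y A' a b"
  using assms(1)
proof (rule factorizableE)
  fix K :: "nat set" and u v
  assume "finite K" "\<And>x y. x \<in> X \<Longrightarrow> y \<in> Y \<Longrightarrow> (\<Sum>k\<in>K. u x k * v y k) = A x y"
    "\<And>x. x \<in> X \<Longrightarrow> (\<Sum>k\<in>K. (u x k)\<^sup>2) \<le> a"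
    "\<And>y. y \<in> Y \<Longrightarrow> (\<Sum>k\<in>K. (v y k)\<^sup>2) \<le> b"
  then show ?thesis
    by (intro factorizableI[where K=K and u=u and v=v]) (simp_all add: assms(2))
qed

lemma factorizable_mono:
  assumes "factorizable X Y A a b" and "a \<le> a'" and "b \<le> b'"
  shows "factorizable X Y A a' b'"
  using assms(1)
proof (rule factorizableE)
  fix K :: "nat set" and u v
  assume "finite K" "\<And>x y. x \<in> X \<Longrightarrow> y \<in> Y \<Longrightarrow> (\<Sum>k\<in>K. u x k * v y k) = A x y"
    and u: "\<And>x. x \<in> X \<Longrightarrow> (\<Sum>k\<in>K. (u x k)\<^sup>2) \<le> a"
    and v: "\<And>y. y \<in> Y \<Longrightarrow> (\<Sum>k\<in>K. (v y k)\<^sup>2) \<le> b"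
  then show ?thesis
    by (intro factorizableI[where K=K and u=u and v=v])
      (simp_all add: order_trans[OF u assms(2)] order_trans[OF v assms(3)])
qed

lemma factorizable_one: "factorizable X Y (\<lambda>_ _. 1) 1 1"
  by (rule factorizableI[where K="{()}" and u="\<lambda>_ _. 1" and v="\<lambda>_ _. 1"]) simp_all

lemma factorizable_zero: "factorizable X Y (\<lambda>_ _. 0) 0 0"
  by (rule factorizableI[where K="{}"]) simp_all

lemma factorizable_uminus:
  assumes "factorizable X Y A a b"
  shows "factorizable X Y (\<lambda>x y. - A x y) a b"
  using assms
proof (rule factorizableE)
  fix K :: "nat set" and u v
  assume "finite K" "\<And>x y. x \<in> X \<Longrightarrow> y \<in> Y \<Longrightarrow> (\<Sum>k\<in>K. u x k * v y k) = A x y"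
    "\<And>x. x \<in> X \<Longrightarrow> (\<Sum>k\<in>K. (u x k)\<^sup>2) \<le> a"
    "\<And>y. y \<in> Y \<Longrightarrow> (\<Sum>k\<in>K. (v y k)\<^sup>2) \<le> b"
  then show ?thesis
    by (intro factorizableI[where K=K and u=u and v="\<lambda>y k. - v y k"]) (simp_all add: sum_negf)
qed

lemma factorizable_add:
  assumes "factorizable X Y A a b" and "factorizable X Y A' a' b'"
  shows "factorizable X Y (\<lambda>x y. A x y + A' x y) (a + a') (b + b')"
proof -
  obtain K :: "nat set" and u v where K: "finite K"
    and uv: "\<And>x y. x \<in> X \<Longrightarrow> y \<in> Y \<Longrightarrow> (\<Sum>k\<in>K. u x k * v y k) = A x y"
    and u: "\<And>x. x \<in> X \<Longrightarrow> (\<Sum>k\<in>K. (u x k)\<^sup>2) \<le> a"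
    and v: "\<And>y. y \<in> Y \<Longrightarrow> (\<Sum>k\<in>K. (v y k)\<^sup>2) \<le> b"
    using assms(1) by (elim factorizableE) auto
  obtain K' :: "nat set" and u' v' where K': "finite K'"
    and uv': "\<And>x y. x \<in> X \<Longrightarrow> y \<in> Y \<Longrightarrow> (\<Sum>k\<in>K'. u' x k * v' y k) = A' x y"
    and u': "\<And>x. x \<in> X \<Longrightarrow> (\<Sum>k\<in>K'. (u' x k)\<^sup>2) \<le> a'"
    and v': "\<And>y. y \<in> Y \<Longrightarrow> (\<Sum>k\<in>K'. (v' y k)\<^sup>2) \<le> b'"
    using assms(2) by (elim factorizableE) auto
  show ?thesis
    by (rule factorizableI[where K="K <+> K'"
          and u="\<lambda>x. case_sum (u x) (u' x)" and v="\<lambda>y. case_sum (v y) (v' y)"])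
      (simp_all add: K K' sum.Plus comp_def uv uv' add_mono u u' v v')
qed

lemma factorizable_mult:
  assumes "factorizable X Y A a b" and "factorizable X Y A' a' b'"
  shows "factorizable X Y (\<lambda>x y. A x y * A' x y) (a * a') (b * b')"
proof -
  obtain K :: "nat set" and u v where K: "finite K"
    and uv: "\<And>x y. x \<in> X \<Longrightarrow> y \<in> Y \<Longrightarrow> (\<Sum>k\<in>K. u x k * v y k) = A x y"
    and u: "\<And>x. x \<in> X \<Longrightarrow> (\<Sum>k\<in>K. (u x k)\<^sup>2) \<le> a"
    and v: "\<And>y. y \<in> Y \<Longrightarrow> (\<Sum>k\<in>K. (v y k)\<^sup>2) \<le> b"
    using assms(1) by (elim factorizableE) auto
  obtain K' :: "nat set" and u' v' where K': "finite K'"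
    and uv': "\<And>x y. x \<in> X \<Longrightarrow> y \<in> Y \<Longrightarrow> (\<Sum>k\<in>K'. u' x k * v' y k) = A' x y"
    and u': "\<And>x. x \<in> X \<Longrightarrow> (\<Sum>k\<in>K'. (u' x k)\<^sup>2) \<le> a'"
    and v': "\<And>y. y \<in> Y \<Longrightarrow> (\<Sum>k\<in>K'. (v' y k)\<^sup>2) \<le> b'"
    using assms(2) by (elim factorizableE) auto
  have tensor: "(\<Sum>(k, k')\<in>K \<times> K'. h k * h' k') = (\<Sum>k\<in>K. h k) * (\<Sum>k'\<in>K'. h' k')"
    for h h' :: "nat \<Rightarrow> real"
    by (simp only: sum_product sum.cartesian_product)
  have norm_le: "(\<Sum>(k, k')\<in>K \<times> K'. (w k * w' k')\<^sup>2) \<le> c * c'"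
    if le: "(\<Sum>k\<in>K. (w k)\<^sup>2) \<le> c" "(\<Sum>k'\<in>K'. (w' k')\<^sup>2) \<le> c'"
    for w w' :: "nat \<Rightarrow> real" and c c'
  proof -
    have "0 \<le> (\<Sum>k\<in>K. (w k)\<^sup>2)" "0 \<le> (\<Sum>k'\<in>K'. (w' k')\<^sup>2)"
      by (simp_all add: sum_nonneg)
    with le have "(\<Sum>k\<in>K. (w k)\<^sup>2) * (\<Sum>k'\<in>K'. (w' k')\<^sup>2) \<le> c * c'"
      by (meson mult_mono order_trans)
    then show ?thesis
      by (simp only: power_mult_distrib tensor)
  qed
  show ?thesis
  proof (rule factorizableI[where K="K \<times> K'"
        and u="\<lambda>x (k, k'). u x k * u' x k'" and v="\<lambda>y (k, k'). v y k * v' y k'"])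
    fix x y assume "x \<in> X" "y \<in> Y"
    have "(\<Sum>(k, k')\<in>K \<times> K'. u x k * u' x k' * (v y k * v' y k'))
        = (\<Sum>(k, k')\<in>K \<times> K'. (u x k * v y k) * (u' x k' * v' y k'))"
      by (rule sum.cong) (auto simp: mult_ac)
    also have "\<dots> = A x y * A' x y"
      using \<open>x \<in> X\<close> \<open>y \<in> Y\<close> by (simp only: tensor uv uv')
    finally show "(\<Sum>p\<in>K \<times> K'. (case p of (k, k') \<Rightarrow> u x k * u' x k') *
        (case p of (k, k') \<Rightarrow> v y k * v' y k')) = A x y * A' x y"
      by (simp add: case_prod_beta')
  next
    fix x assume "x \<in> X"
    then show "(\<Sum>p\<in>K \<times> K'. (case p of (k, k') \<Rightarrow> u x k * u' x k')\<^sup>2) \<le> a * a'"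
      using norm_le[OF u u'] by (simp add: case_prod_beta')
  next
    fix y assume "y \<in> Y"
    then show "(\<Sum>p\<in>K \<times> K'. (case p of (k, k') \<Rightarrow> v y k * v' y k')\<^sup>2) \<le> b * b'"
      using norm_le[OF v v'] by (simp add: case_prod_beta')
  qed (simp add: K K')
qed

lemma factorizable_sum:
  assumes "finite I" and "\<And>i. i \<in> I \<Longrightarrow> factorizable X Y (A i) (a i) (b i)"
  shows "factorizable X Y (\<lambda>x y. \<Sum>i\<in>I. A i x y) (\<Sum>i\<in>I. a i) (\<Sum>i\<in>I. b i)"
  using assms by (induction I rule: finite_induct) (simp_all add: factorizable_zero factorizable_add)

lemma factorizable_prod:
  assumes "finite I" and "\<And>i. i \<in> I \<Longrightarrow> factorizable X Y (A i) (a i) (b i)"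
  shows "factorizable X Y (\<lambda>x y. \<Prod>i\<in>I. A i x y) (\<Prod>i\<in>I. a i) (\<Prod>i\<in>I. b i)"
  using assms by (induction I rule: finite_induct) (simp_all add: factorizable_one factorizable_mult)

lemma factorizable_one_minus:
  assumes "factorizable X Y A a b"
  shows "factorizable X Y (\<lambda>x y. 1 - A x y) (1 + a) (1 + b)"
  using factorizable_add[OF factorizable_one factorizable_uminus[OF assms]] by simp

lemma sum_indicator_disjoint_le_1:
  assumes "finite R" and "disjoint_family_on f R"
  shows "(\<Sum>k\<in>R. indicator (f k) x) \<le> (1 :: real)"
  unfolding indicator_UN_disjoint[OF assms, symmetric] by simp

lemma blocky_values:
  assumes "blocky X Y B" and "x \<in> X" and "y \<in> Y"
  shows "B x y = 0 \<or> B x y = 1"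
proof -
  have "boolean_matrix X Y B"
    using assms(1) unfolding blocky_def by (rule conjunct1)
  then show ?thesis
    using assms(2,3) unfolding boolean_matrix_def by blast
qed

lemma factorizable_blocky:
  assumes "blocky X Y B" and "finite X" and "finite Y"
  shows "factorizable X Y B 1 1"
proof -
  obtain I :: "nat set" and Xs Ys where
    sub: "\<forall>i\<in>I. Xs i \<subseteq> X \<and> Ys i \<subseteq> Y" and
    disj: "\<forall>i\<in>I. \<forall>j\<in>I. i \<noteq> j \<longrightarrow> Xs i \<inter> Xs j = {} \<and> Ys i \<inter> Ys j = {}" and
    supp: "{(x, y). x \<in> X \<and> y \<in> Y \<and> B x y = 1} = (\<Union>i\<in>I. Xs i \<times> Ys i)"
    using assms(1) unfolding blocky_def by (elim conjE exE) (rule that)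
  \<comment> \<open>Index by the blocks themselves: I may be infinite, but the blocks lie in Pow X \<times> Pow Y.\<close>
  define R where "R = (\<lambda>i. (Xs i, Ys i)) ` I"
  have "R \<subseteq> Pow X \<times> Pow Y"
    using sub by (auto simp: R_def)
  then have R: "finite R"
    by (rule finite_subset) (simp add: assms(2,3))
  have disj_pairs: "fst k \<inter> fst k' = {} \<and> snd k \<inter> snd k' = {}" if kk': "k \<in> R" "k' \<in> R" "k \<noteq> k'" for k k'
  proof -
    obtain m n where mn: "m \<in> I" "n \<in> I" and k: "k = (Xs m, Ys m)" "k' = (Xs n, Ys n)"
      using kk'(1,2) by (auto simp: R_def)
    with kk'(3) have "m \<noteq> n"
      by auto
    with mn k disj show ?thesis
      by simp
  qed
  then have disj_fst: "disjoint_family_on fst R" and disj_snd: "disjoint_family_on snd R"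
    and disj_rect: "disjoint_family_on (\<lambda>k. fst k \<times> snd k) R"
    by (simp_all add: disjoint_family_on_def Times_Int_Times)
  have blocks: "(\<Union>k\<in>R. fst k \<times> snd k) = {(x, y). x \<in> X \<and> y \<in> Y \<and> B x y = 1}"
    unfolding supp R_def by auto
  have indicator_sq: "(indicator A z)\<^sup>2 = (indicator A z :: real)" for A and z :: 'c
    by (simp add: indicator_def)
  show ?thesis
  proof (rule factorizableI[where K=R and u="\<lambda>x k. indicator (fst k) x" and v="\<lambda>y k. indicator (snd k) y"])
    fix x y assume x: "x \<in> X" and y: "y \<in> Y"
    have "(\<Sum>k\<in>R. indicator (fst k) x * indicator (snd k) y)
        = (\<Sum>k\<in>R. indicator (fst k \<times> snd k) (x, y) :: real)"
      by (simp add: indicator_times)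
    also have "\<dots> = indicator (\<Union>k\<in>R. fst k \<times> snd k) (x, y)"
      by (rule indicator_UN_disjoint[OF R disj_rect, symmetric])
    also have "\<dots> = B x y"
      using blocky_values[OF assms(1) x y] x y unfolding blocks by (auto simp: indicator_def)
    finally show "(\<Sum>k\<in>R. indicator (fst k) x * indicator (snd k) y) = B x y" .
  next
    fix x show "(\<Sum>k\<in>R. (indicator (fst k) x)\<^sup>2) \<le> (1::real)"
      unfolding indicator_sq by (rule sum_indicator_disjoint_le_1[OF R disj_fst])
  next
    fix y show "(\<Sum>k\<in>R. (indicator (snd k) y)\<^sup>2) \<le> (1::real)"
      unfolding indicator_sq by (rule sum_indicator_disjoint_le_1[OF R disj_snd])
  qed (rule R)
qed

lemma prod_literals_eq_of_bool:
  fixes S p :: "'i \<Rightarrow> bool"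
  assumes "finite I"
  shows "(\<Prod>i\<in>I. if S i then of_bool (p i) else 1 - of_bool (p i)) = (of_bool (\<forall>i\<in>I. S i = p i) :: real)"
  using assms by (induction I rule: finite_induct) auto

lemma of_bool_eq_sum_prod_literals:
  fixes \<Gamma> :: "bool list \<Rightarrow> bool" and b :: "nat \<Rightarrow> real"
  assumes "\<And>i. i < r \<Longrightarrow> b i = 0 \<or> b i = 1"
  shows "of_bool (\<Gamma> (map (\<lambda>i. b i = 1) [0..<r]))
    = (\<Sum>S\<in>{S \<in> PiE {..<r} (\<lambda>_. UNIV). \<Gamma> (map S [0..<r])}. \<Prod>i<r. if S i then b i else 1 - b i)"
proof -
  define p where "p = restrict (\<lambda>i. b i = 1) {..<r}"
  define T where "T = {S \<in> PiE {..<r} (\<lambda>_. UNIV). \<Gamma> (map S [0..<r])}"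
  have p: "p \<in> PiE {..<r} (\<lambda>_. UNIV)"
    by (simp add: p_def)
  have b_eq: "b i = of_bool (p i)" if "i < r" for i
    using assms[OF that] that by (auto simp: p_def)
  have map_p: "map p [0..<r] = map (\<lambda>i. b i = 1) [0..<r]"
    by (rule map_cong) (simp_all add: p_def)
  have literals: "(\<Prod>i<r. if S i then b i else 1 - b i) = of_bool (S = p)"
    if S: "S \<in> PiE {..<r} (\<lambda>_. UNIV)" for S
  proof -
    have "(\<Prod>i<r. if S i then b i else 1 - b i) = (\<Prod>i<r. if S i then of_bool (p i) else 1 - of_bool (p i))"
      by (rule prod.cong) (simp_all add: b_eq)
    also have "\<dots> = of_bool (\<forall>i\<in>{..<r}. S i = p i)"
      by (rule prod_literals_eq_of_bool) simp
    also have "(\<forall>i\<in>{..<r}. S i = p i) \<longleftrightarrow> S = p"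
      using PiE_ext[OF S p] by auto
    finally show ?thesis .
  qed
  have "(\<Sum>S\<in>T. \<Prod>i<r. if S i then b i else 1 - b i) = (\<Sum>S\<in>T. if S = p then 1 else 0)"
    by (rule sum.cong) (simp_all add: literals T_def)
  also have "\<dots> = of_bool (p \<in> T)"
    by (simp add: T_def finite_PiE)
  also have "p \<in> T \<longleftrightarrow> \<Gamma> (map (\<lambda>i. b i = 1) [0..<r])"
    unfolding T_def map_p[symmetric] using p by simp
  finally show ?thesis
    unfolding T_def ..
qed

lemma sum_PiE_prod_bool: "(\<Sum>S\<in>PiE I (\<lambda>_. UNIV). \<Prod>i\<in>I. c (S i)) = (c True + c False) ^ card I"
  if "finite I" for c :: "bool \<Rightarrow> real"
  using prod_sum_PiE[OF that, of "\<lambda>_. UNIV" "\<lambda>_. c"] by (simp add: UNIV_bool add.commute)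

lemma factorizable_blocky_literal:
  assumes "blocky X Y B" and "finite X" and "finite Y"
  shows "factorizable X Y (\<lambda>x y. if s then B x y else 1 - B x y) (if s then 1 else 2) (if s then 1 else 2)"
  using factorizable_blocky[OF assms] factorizable_one_minus[OF factorizable_blocky[OF assms]]
  by (cases s) simp_all

lemma factorizable_sum_prod_blocky_literals:
  assumes "finite X" and "finite Y" and "finite I" and "\<And>i. i \<in> I \<Longrightarrow> blocky X Y (B i)"
    and "T \<subseteq> PiE I (\<lambda>_. UNIV)"
  shows "factorizable X Y (\<lambda>x y. \<Sum>S\<in>T. \<Prod>i\<in>I. if S i then B i x y else 1 - B i x y) (3 ^ card I) (3 ^ card I)"
proof -
  define c :: "bool \<Rightarrow> real" where "c s = (if s then 1 else 2)" for s
  have T: "finite T"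
    using assms(5,3) by (rule finite_subset[OF _ finite_PiE]) simp
  have "factorizable X Y (\<lambda>x y. \<Sum>S\<in>T. \<Prod>i\<in>I. if S i then B i x y else 1 - B i x y)
      (\<Sum>S\<in>T. \<Prod>i\<in>I. c (S i)) (\<Sum>S\<in>T. \<Prod>i\<in>I. c (S i))"
  proof (rule factorizable_sum[OF T], rule factorizable_prod[OF assms(3)])
    fix S i assume "i \<in> I"
    show "factorizable X Y (\<lambda>x y. if S i then B i x y else 1 - B i x y) (c (S i)) (c (S i))"
      unfolding c_def using assms(4)[OF \<open>i \<in> I\<close>] assms(1,2) by (rule factorizable_blocky_literal)
  qed
  moreover have "(\<Sum>S\<in>T. \<Prod>i\<in>I. c (S i)) \<le> (\<Sum>S\<in>PiE I (\<lambda>_. UNIV). \<Prod>i\<in>I. c (S i))"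
    using assms(3,5) by (intro sum_mono2 prod_nonneg) (simp_all add: finite_PiE c_def)
  moreover have "(\<Sum>S\<in>PiE I (\<lambda>_. UNIV). \<Prod>i\<in>I. c (S i)) = 3 ^ card I"
    using sum_PiE_prod_bool[OF assms(3), of c] by (simp add: c_def)
  ultimately show ?thesis
    using factorizable_mono by fastforce
qed

theorem proposition3p5:
  fixes X :: "'a set" and Y :: "'b set" and r :: nat
    and B :: "nat \<Rightarrow> 'a \<Rightarrow> 'b \<Rightarrow> real" and \<Gamma> :: "bool list \<Rightarrow> bool"
    and F :: "'a \<Rightarrow> 'b \<Rightarrow> real"
  assumes "finite X" and "finite Y"
    and "\<And>i. i < r \<Longrightarrow> blocky X Y (B i)"
    and "\<And>x y. x \<in> X \<Longrightarrow> y \<in> Y \<Longrightarrow> F x y = of_bool (\<Gamma> (map (\<lambda>i. B i x y = 1) [0..<r]))"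
  shows "gamma2 X Y F \<le> 3 ^ r"
proof -
  define T where "T = {S \<in> PiE {..<r} (\<lambda>_. UNIV). \<Gamma> (map S [0..<r])}"
  have "factorizable X Y (\<lambda>x y. \<Sum>S\<in>T. \<Prod>i<r. if S i then B i x y else 1 - B i x y)
      (3 ^ card {..<r}) (3 ^ card {..<r})"
    using assms(1-3) by (intro factorizable_sum_prod_blocky_literals) (auto simp: T_def)
  then have "factorizable X Y F (3 ^ card {..<r}) (3 ^ card {..<r})"
  proof (rule factorizable_cong)
    fix x y assume x: "x \<in> X" and y: "y \<in> Y"
    have "B i x y = 0 \<or> B i x y = 1" if "i < r" for i
      using assms(3)[OF that] x y by (rule blocky_values)
    then show "(\<Sum>S\<in>T. \<Prod>i<r. if S i then B i x y else 1 - B i x y) = F x y"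
      unfolding T_def assms(4)[OF x y] by (rule of_bool_eq_sum_prod_literals[symmetric])
  qed
  then have "gamma2 X Y F \<le> sqrt (3 ^ card {..<r} * 3 ^ card {..<r})"
    by (rule gamma2_le_sqrt_if_factorizable) simp_all
  then show ?thesis
    by simp
qed

end
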